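(* Let $f$ be a good piecewise expanding $C^1$ unimodal map. Suppose $(f_n)$ is a sequence of piecewise expanding $C^1$ unimodal maps with $|f_n-f|_1\to0$, and $v_n,v\in\mathcal B^0(I)$ satisfy $|v_n-v|_0\to0$ and $J(f_n,v_n)=0$ for all $n$. Then $J(f,v)=0$.
   Context: Let $I=[-1,1]$ and $c=0$. For $k\ge0$, $\mathcal B^k(I)$ is the Banach space of continuous $f:I\to\mathbb R$ that are $C^k$ on $[-1,0]$ and on $[0,1]$ with $f(1)=f(-1)$, normed by $|f|_k=\max\{|f|_{C^k[-1,0]},|f|_{C^k[0,1]}\}$, $|f|_{C^k(Q)}=\max_{0\le i\le k}\sup_Q|D^if|$. A piecewise expanding $C^1$ unimodal map is an $f\in\mathcal B^1(I)$ with $f(-1)=f(1)=-1$, $\inf_{x\in[-1,0]}Df(x)>1$, $\sup_{x\in[0,1]}Df(x)<-1$ and $f(0)\le1$. Such $f$ is good if either $c$ is not periodic, or $c$ has prime period $p\ge2$ and $|Df^{p-1}(f(c))|\min\{|Df^+(c)|,|Df^-(c)|\}>2$ ($Df^\pm(c)$ one-sided derivatives at $c$). For bounded $v:I\to\mathbb R$: if $c$ is not periodic for $f$, $J(f,v)=\sum_{i=0}^\infty \frac{v(f^i(c))}{Df^i(f(c))}$; if $c$ has prime period $p$, $J(f,v)=\sum_{i=0}^{p-1}\frac{v(f^i(c))}{Df^i(f(c))}$. *)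

theory Defs
  imports "HOL-Analysis.Analysis"
begin

text \<open>I = [-1,1], c = 0. Left piece Q_L = [-1,0], right piece Q_R = [0,1].
  Iterated one-sided derivatives of the restriction of f to a piece Q.\<close>

fun pD :: "real set \<Rightarrow> nat \<Rightarrow> (real \<Rightarrow> real) \<Rightarrow> real \<Rightarrow> real" where
  "pD Q 0 f = f"
| "pD Q (Suc i) f = (\<lambda>x. vector_derivative (pD Q i f) (at x within Q))"

definition Ck_on :: "nat \<Rightarrow> real set \<Rightarrow> (real \<Rightarrow> real) \<Rightarrow> bool" where
  "Ck_on k Q f \<longleftrightarrow>
     (\<forall>i<k. \<forall>x\<in>Q. (pD Q i f has_real_derivative pD Q (Suc i) f x) (at x within Q))
     \<and> continuous_on Q (pD Q k f)"

definition Bk :: "nat \<Rightarrow> (real \<Rightarrow> real) \<Rightarrow> bool" where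
  "Bk k f \<longleftrightarrow> continuous_on {-1..1} f \<and> Ck_on k {-1..0} f \<and> Ck_on k {0..1} f
     \<and> f 1 = f (-1)"

definition Cnorm :: "nat \<Rightarrow> real set \<Rightarrow> (real \<Rightarrow> real) \<Rightarrow> real" where
  "Cnorm k Q f = Max ((\<lambda>i. SUP x\<in>Q. \<bar>pD Q i f x\<bar>) ` {..k})"

definition Bnorm :: "nat \<Rightarrow> (real \<Rightarrow> real) \<Rightarrow> real" where
  "Bnorm k f = max (Cnorm k {-1..0} f) (Cnorm k {0..1} f)"

definition pw_expanding_unimodal :: "(real \<Rightarrow> real) \<Rightarrow> bool" where
  "pw_expanding_unimodal f \<longleftrightarrow> Bk 1 f \<and> f (-1) = -1 \<and> f 1 = -1
     \<and> (INF x\<in>{-1..0}. pD {-1..0} 1 f x) > 1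
     \<and> (SUP x\<in>{0..1}. pD {0..1} 1 f x) < -1
     \<and> f 0 \<le> 1"

text \<open>Derivative of f away from c = 0 (the value at 0 is never used below).\<close>
definition Df :: "(real \<Rightarrow> real) \<Rightarrow> real \<Rightarrow> real" where
  "Df f x = (if x \<le> 0 then pD {-1..0} 1 f x else pD {0..1} 1 f x)"

text \<open>Df^i(y) = product of Df along the first i points of the orbit of y (chain rule).\<close>
definition Dfn :: "(real \<Rightarrow> real) \<Rightarrow> nat \<Rightarrow> real \<Rightarrow> real" where
  "Dfn f i y = (\<Prod>j<i. Df f ((f ^^ j) y))"

definition c_periodic :: "(real \<Rightarrow> real) \<Rightarrow> bool" where
  "c_periodic f \<longleftrightarrow> (\<exists>p\<ge>1. (f ^^ p) 0 = 0)"

definition c_period :: "(real \<Rightarrow> real) \<Rightarrow> nat" where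
  "c_period f = (LEAST p. p \<ge> 1 \<and> (f ^^ p) 0 = 0)"

definition good :: "(real \<Rightarrow> real) \<Rightarrow> bool" where
  "good f \<longleftrightarrow> pw_expanding_unimodal f \<and>
     (\<not> c_periodic f \<or>
      (c_period f \<ge> 2 \<and>
       \<bar>Dfn f (c_period f - 1) (f 0)\<bar> * min \<bar>pD {0..1} 1 f 0\<bar> \<bar>pD {-1..0} 1 f 0\<bar> > 2))"

definition J :: "(real \<Rightarrow> real) \<Rightarrow> (real \<Rightarrow> real) \<Rightarrow> real" where
  "J f v = (if c_periodic f
            then (\<Sum>i<c_period f. v ((f ^^ i) 0) / Dfn f i (f 0))
            else (\<Sum>i. v ((f ^^ i) 0) / Dfn f i (f 0)))"

end

theory Submission
  imports Defs
begin

(* Uniform expansion makes the tail of the series J(g,w) beyond index K smaller than a constant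
   times lambda^(-K), uniformly for all maps close to f, while each single term depends
   continuously on (g,w) as long as the orbit of c stays away from c, where Df jumps.
   If c is not periodic for f, the first N terms of J(f_n,v_n) converge to those of J(f,v),
   so |J(f,v)| is bounded by a multiple of lambda^(-N) for every N.
   If c has period p for f, the orbit of c for f_n follows that of f through many periods, and
   grouping the terms of J(f_n,v_n) into blocks of length p shows that J(f_n,v_n) is close to
   J(f,v) * sum_m 1/E_m, where E_m is the derivative along m periods. Goodness of f says that
   E_m grows at least like rho^m with rho > 2, which keeps sum_m 1/E_m away from 0; hence
   J(f,v) = 0. *)

lemma Ck_on_1_has_real_derivative:
  "Ck_on 1 Q g \<Longrightarrow> x \<in> Q \<Longrightarrow> (g has_real_derivative pD Q 1 g x) (at x within Q)"
  unfolding Ck_on_def by (metis One_nat_def less_one pD.simps(1))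

lemma Ck_on_continuous_on: "Ck_on k Q g \<Longrightarrow> continuous_on Q (pD Q k g)"
  unfolding Ck_on_def by blast

lemma continuous_on_Icc_bdd:
  fixes h :: "real \<Rightarrow> real"
  assumes "continuous_on {a..b} h"
  shows "bdd_above (h ` {a..b})" "bdd_below (h ` {a..b})"
  using compact_continuous_image[OF assms] compact_Icc
  by (auto intro: bounded_imp_bdd_above bounded_imp_bdd_below compact_imp_bounded)

lemma pw_expanding_unimodalD:
  assumes "pw_expanding_unimodal g"
  shows "continuous_on {-1..1} g" "Ck_on 1 {-1..0} g" "Ck_on 1 {0..1} g"
    "g (-1) = -1" "g 1 = -1" "g 0 \<le> 1"
  using assms unfolding pw_expanding_unimodal_def Bk_def by auto

lemma pw_expanding_unimodal_slopes:
  assumes "pw_expanding_unimodal g"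
  obtains lam where "1 < lam"
    "\<And>x. x \<in> {-1..0} \<Longrightarrow> lam \<le> pD {-1..0} 1 g x"
    "\<And>x. x \<in> {0..1} \<Longrightarrow> pD {0..1} 1 g x \<le> - lam"
proof
  let ?a = "INF x\<in>{-1..0}. pD {-1..0} 1 g x" and ?b = "SUP x\<in>{0..1}. pD {0..1} 1 g x"
  have "1 < ?a" "?b < -1" using assms unfolding pw_expanding_unimodal_def by auto
  then show "1 < min ?a (- ?b)" by simp
  show "min ?a (- ?b) \<le> pD {-1..0} 1 g x" if "x \<in> {-1..0}" for x
    using continuous_on_Icc_bdd(2)[OF Ck_on_continuous_on[OF pw_expanding_unimodalD(2)[OF assms]]] that
    by (intro min.coboundedI1 cINF_lower) auto
  show "pD {0..1} 1 g x \<le> - min ?a (- ?b)" if "x \<in> {0..1}" for x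
  proof -
    have "pD {0..1} 1 g x \<le> ?b"
      using continuous_on_Icc_bdd(1)[OF Ck_on_continuous_on[OF pw_expanding_unimodalD(3)[OF assms]]] that
      by (intro cSUP_upper) auto
    then show ?thesis by linarith
  qed
qed

lemma pw_expanding_unimodal_abs_Df_ge:
  assumes "pw_expanding_unimodal g"
  obtains lam where "1 < lam" "\<And>x. x \<in> {-1..1} \<Longrightarrow> lam \<le> \<bar>Df g x\<bar>"
proof -
  obtain lam where lam: "1 < lam"
    "\<And>x. x \<in> {-1..0} \<Longrightarrow> lam \<le> pD {-1..0} 1 g x"
    "\<And>x. x \<in> {0..1} \<Longrightarrow> pD {0..1} 1 g x \<le> - lam"
    using pw_expanding_unimodal_slopes[OF assms] by blast
  have "lam \<le> \<bar>Df g x\<bar>" if "x \<in> {-1..1}" for x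
    using lam(2)[of x] lam(3)[of x] lam(1) that unfolding Df_def by (auto split: if_splits)
  with lam(1) show thesis by (rule that)
qed

lemma pw_expanding_unimodal_maps_into:
  assumes "pw_expanding_unimodal g" "x \<in> {-1..1}"
  shows "g x \<in> {-1..1}"
proof -
  note g = pw_expanding_unimodalD[OF assms(1)]
  obtain lam where lam: "1 < lam"
    "\<And>x. x \<in> {-1..0} \<Longrightarrow> lam \<le> pD {-1..0} 1 g x"
    "\<And>x. x \<in> {0..1} \<Longrightarrow> pD {0..1} 1 g x \<le> - lam"
    using pw_expanding_unimodal_slopes[OF assms(1)] by blast
  have increasing: "\<exists>y. DERIV g z :> y \<and> 0 \<le> y" if "-1 < z" "z < 0" for z
    using Ck_on_1_has_real_derivative[OF g(2), of z] at_within_Icc_at[OF that] lam(1) lam(2)[of z] that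
    by (intro exI[of _ "pD {-1..0} 1 g z"]) auto
  have decreasing: "\<exists>y. DERIV g z :> y \<and> y \<le> 0" if "0 < z" "z < 1" for z
    using Ck_on_1_has_real_derivative[OF g(3), of z] at_within_Icc_at[OF that] lam(1) lam(3)[of z] that
    by (intro exI[of _ "pD {0..1} 1 g z"]) auto
  have cont: "continuous_on {a..b} g" if "-1 \<le> a" "b \<le> 1" for a b
    using continuous_on_subset[OF g(1)] that by auto
  show ?thesis
  proof (cases "x \<le> 0")
    case True
    then have "g (-1) \<le> g x" "g x \<le> g 0"
      using DERIV_nonneg_imp_increasing_open[of "-1" x g] DERIV_nonneg_imp_increasing_open[of x 0 g]
        increasing cont assms(2) by auto
    then show ?thesis using g by auto
  next
    case False
    then have "g 1 \<le> g x" "g x \<le> g 0"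
      using DERIV_nonpos_imp_decreasing_open[of x 1 g] DERIV_nonpos_imp_decreasing_open[of 0 x g]
        decreasing cont assms(2) by auto
    then show ?thesis using g by auto
  qed
qed

definition critical_orbit :: "(real \<Rightarrow> real) \<Rightarrow> nat \<Rightarrow> real" where
  "critical_orbit g i = (g ^^ i) 0"

lemma critical_orbit_0 [simp]: "critical_orbit g 0 = 0"
  by (simp add: critical_orbit_def)

lemma critical_orbit_Suc: "critical_orbit g (Suc i) = g (critical_orbit g i)"
  by (simp add: critical_orbit_def)

lemma critical_orbit_in_I:
  assumes "pw_expanding_unimodal g"
  shows "critical_orbit g i \<in> {-1..1}"
proof (induction i)
  case (Suc i)
  then show ?case
    unfolding critical_orbit_Suc by (rule pw_expanding_unimodal_maps_into[OF assms])
qed simp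

lemma critical_orbit_periodic:
  assumes "critical_orbit g p = 0"
  shows "critical_orbit g (m * p + r) = critical_orbit g r"
proof -
  have "(g ^^ (m * p)) 0 = 0"
    using assms by (induction m) (simp_all add: critical_orbit_def funpow_add)
  then show ?thesis
    by (simp add: critical_orbit_def funpow_add add.commute)
qed

lemma c_period_props:
  assumes "c_periodic g"
  shows "1 \<le> c_period g" "critical_orbit g (c_period g) = 0"
    "\<And>i. 1 \<le> i \<Longrightarrow> i < c_period g \<Longrightarrow> critical_orbit g i \<noteq> 0"
proof -
  have ex: "\<exists>p. 1 \<le> p \<and> (g ^^ p) 0 = 0" using assms unfolding c_periodic_def by auto
  show "1 \<le> c_period g" "critical_orbit g (c_period g) = 0"
    using LeastI_ex[OF ex] unfolding c_period_def critical_orbit_def by auto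
  show "\<And>i. 1 \<le> i \<Longrightarrow> i < c_period g \<Longrightarrow> critical_orbit g i \<noteq> 0"
    using not_less_Least unfolding c_period_def critical_orbit_def by blast
qed

lemma critical_orbit_nonzero_off_multiples:
  assumes "c_periodic g" "\<not> c_period g dvd i"
  shows "critical_orbit g i \<noteq> 0"
proof -
  let ?p = "c_period g"
  have "critical_orbit g i = critical_orbit g (i div ?p * ?p + i mod ?p)" by simp
  also have "\<dots> = critical_orbit g (i mod ?p)"
    using c_period_props(2)[OF assms(1)] by (rule critical_orbit_periodic)
  finally show ?thesis
    using c_period_props(1)[OF assms(1)] c_period_props(3)[OF assms(1), of "i mod ?p"] assms(2)
    by (simp add: dvd_eq_mod_eq_0)
qed

lemma c_period_ge_if_orbit_nonzero:
  assumes "\<And>i. 1 \<le> i \<Longrightarrow> i < N \<Longrightarrow> critical_orbit g i \<noteq> 0"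
  shows "\<not> c_periodic g \<or> N \<le> c_period g"
  using assms c_period_props(1,2) not_le by blast

lemma Dfn_critical_orbit: "Dfn g i (g 0) = (\<Prod>j<i. Df g (critical_orbit g (Suc j)))"
  unfolding Dfn_def critical_orbit_def by (simp add: funpow_Suc_right del: funpow.simps)

lemma Dfn_add:
  "Dfn g (a + b) (g 0) = Dfn g a (g 0) * (\<Prod>j<b. Df g (critical_orbit g (Suc (a + j))))"
  by (induction b) (simp_all add: Dfn_critical_orbit mult.assoc)

lemma abs_prod_ge_power:
  fixes h :: "nat \<Rightarrow> real"
  assumes "\<And>j. j < k \<Longrightarrow> lam \<le> \<bar>h j\<bar>" "0 \<le> lam"
  shows "lam ^ k \<le> \<bar>\<Prod>j<k. h j\<bar>"
proof -
  have "lam ^ k = (\<Prod>j<k. lam)" by simp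
  also have "\<dots> \<le> (\<Prod>j<k. \<bar>h j\<bar>)" by (rule prod_mono) (use assms in auto)
  finally show ?thesis by (simp add: abs_prod)
qed

definition J_term :: "(real \<Rightarrow> real) \<Rightarrow> (real \<Rightarrow> real) \<Rightarrow> nat \<Rightarrow> real" where
  "J_term g w i = w (critical_orbit g i) / Dfn g i (g 0)"

lemma J_periodic: "c_periodic g \<Longrightarrow> J g w = (\<Sum>i<c_period g. J_term g w i)"
  by (simp add: J_def J_term_def critical_orbit_def)

lemma J_not_periodic: "\<not> c_periodic g \<Longrightarrow> J g w = (\<Sum>i. J_term g w i)"
  by (simp add: J_def J_term_def critical_orbit_def)

lemma abs_pD_le_Cnorm:
  fixes h :: "real \<Rightarrow> real"
  assumes "continuous_on {a..b} (pD {a..b} i h)" "i \<le> k" "x \<in> {a..b}"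
  shows "\<bar>pD {a..b} i h x\<bar> \<le> Cnorm k {a..b} h"
proof -
  have "continuous_on {a..b} (\<lambda>x. \<bar>pD {a..b} i h x\<bar>)"
    using assms(1) by (intro continuous_intros)
  then have "\<bar>pD {a..b} i h x\<bar> \<le> (SUP x\<in>{a..b}. \<bar>pD {a..b} i h x\<bar>)"
    by (rule cSUP_upper[OF assms(3) continuous_on_Icc_bdd(1)])
  also have "\<dots> \<le> Cnorm k {a..b} h"
    unfolding Cnorm_def by (rule Max_ge) (use assms(2) in auto)
  finally show ?thesis .
qed

lemma abs_le_Bnorm:
  fixes h :: "real \<Rightarrow> real"
  assumes "continuous_on {-1..1} h" "x \<in> {-1..1}"
  shows "\<bar>h x\<bar> \<le> Bnorm k h"
proof -
  have "continuous_on {a..b} (pD {a..b} 0 h)" if "-1 \<le> a" "b \<le> 1" for a b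
    using continuous_on_subset[OF assms(1)] that by auto
  then show ?thesis
    using abs_pD_le_Cnorm[of "-1" 0 0 h k x] abs_pD_le_Cnorm[of 0 1 0 h k x] assms(2)
    unfolding Bnorm_def by (cases "x \<le> 0") auto
qed

lemma pD_1_diff:
  assumes "Ck_on 1 {a..b} g1" "Ck_on 1 {a..b} g2" "a < b" "x \<in> {a..b}"
  shows "pD {a..b} 1 (\<lambda>x. g1 x - g2 x) x = pD {a..b} 1 g1 x - pD {a..b} 1 g2 x"
proof -
  have "((\<lambda>x. g1 x - g2 x) has_real_derivative pD {a..b} 1 g1 x - pD {a..b} 1 g2 x) (at x within {a..b})"
    using Ck_on_1_has_real_derivative[OF assms(1,4)] Ck_on_1_has_real_derivative[OF assms(2,4)]
    by (intro derivative_intros)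
  then show ?thesis
    using vector_derivative_within_closed_interval[OF assms(3,4)]
    by (simp add: has_real_derivative_iff_has_vector_derivative)
qed

lemma abs_pD_1_diff_le_Bnorm:
  assumes "Ck_on 1 {a..b} g1" "Ck_on 1 {a..b} g2" "a < b" "x \<in> {a..b}"
    and "{a..b} = {-1..0} \<or> {a..b} = {0..1}"
  shows "\<bar>pD {a..b} 1 g1 x - pD {a..b} 1 g2 x\<bar> \<le> Bnorm 1 (\<lambda>x. g1 x - g2 x)"
proof -
  have "continuous_on {a..b} (\<lambda>x. pD {a..b} 1 g1 x - pD {a..b} 1 g2 x)"
    using Ck_on_continuous_on[OF assms(1)] Ck_on_continuous_on[OF assms(2)]
    by (intro continuous_intros)
  then have "continuous_on {a..b} (pD {a..b} 1 (\<lambda>x. g1 x - g2 x))"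
    by (rule continuous_on_eq) (use pD_1_diff[OF assms(1-3)] in auto)
  then have "\<bar>pD {a..b} 1 (\<lambda>x. g1 x - g2 x) x\<bar> \<le> Cnorm 1 {a..b} (\<lambda>x. g1 x - g2 x)"
    by (rule abs_pD_le_Cnorm[OF _ order_refl assms(4)])
  then show ?thesis
    using pD_1_diff[OF assms(1-4)] assms(5) unfolding Bnorm_def by auto
qed

lemma abs_Df_diff_le_Bnorm:
  assumes "pw_expanding_unimodal g1" "pw_expanding_unimodal g2" "x \<in> {-1..1}"
  shows "\<bar>Df g1 x - Df g2 x\<bar> \<le> Bnorm 1 (\<lambda>x. g1 x - g2 x)"
  using abs_pD_1_diff_le_Bnorm[of "-1" 0 g1 g2 x] abs_pD_1_diff_le_Bnorm[of 0 1 g1 g2 x] assms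
    pw_expanding_unimodalD(2,3)[OF assms(1)] pw_expanding_unimodalD(2,3)[OF assms(2)]
  unfolding Df_def by (cases "x \<le> 0") auto

lemma sum_power_le:
  fixes q :: real
  assumes "0 \<le> q" "q < 1"
  shows "(\<Sum>k<d. q ^ k) \<le> 1 / (1 - q)"
proof -
  have "(\<Sum>k<d. q ^ k) = (1 - q ^ d) / (1 - q)" using assms(2) by (simp add: sum_gp_strict)
  also have "\<dots> \<le> 1 / (1 - q)" using assms by (intro divide_right_mono) auto
  finally show ?thesis .
qed

lemma abs_sum_inverse_ge:
  fixes e :: "nat \<Rightarrow> real"
  assumes rho: "2 < rho" and "1 \<le> M" and "e 0 = 1"
    and e_ge: "\<And>m. m < M \<Longrightarrow> rho ^ m \<le> \<bar>e m\<bar>"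
  shows "(rho - 2) / (rho - 1) \<le> \<bar>\<Sum>m<M. 1 / e m\<bar>"
proof -
  obtain k where M: "M = Suc k" using \<open>1 \<le> M\<close> by (cases M) auto
  have "\<bar>\<Sum>m<k. 1 / e (Suc m)\<bar> \<le> (\<Sum>m<k. (1 / rho) ^ Suc m)"
  proof (rule order_trans[OF sum_abs sum_mono])
    fix m assume "m \<in> {..<k}"
    then have "rho ^ Suc m \<le> \<bar>e (Suc m)\<bar>" using e_ge[of "Suc m"] M by simp
    moreover have "0 < rho ^ Suc m" using rho by simp
    ultimately show "\<bar>1 / e (Suc m)\<bar> \<le> (1 / rho) ^ Suc m"
      by (simp add: power_one_over abs_divide frac_le)
  qed
  also have "\<dots> = 1 / rho * (\<Sum>m<k. (1 / rho) ^ m)" by (simp add: sum_distrib_left)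
  also have "\<dots> \<le> 1 / rho * (1 / (1 - 1 / rho))"
    using rho by (intro mult_left_mono sum_power_le) auto
  also have "\<dots> = 1 / (rho - 1)" using rho by (simp add: field_simps)
  finally have "\<bar>\<Sum>m<k. 1 / e (Suc m)\<bar> \<le> 1 / (rho - 1)" .
  moreover have "(\<Sum>m<M. 1 / e m) = 1 + (\<Sum>m<k. 1 / e (Suc m))"
    unfolding M sum.lessThan_Suc_shift using \<open>e 0 = 1\<close> by simp
  moreover have "(rho - 2) / (rho - 1) = 1 - 1 / (rho - 1)" using rho by (simp add: field_simps)
  ultimately show ?thesis by linarith
qed

lemma zero_if_abs_le_geometric:
  fixes x :: real
  assumes "1 < r" "\<And>N. 1 \<le> N \<Longrightarrow> \<bar>x\<bar> \<le> C / r ^ N"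
  shows "x = 0"
proof -
  have "\<bar>x\<bar> \<le> 0"
    by (rule tendsto_lowerbound[OF LIMSEQ_divide_realpow_zero[OF assms(1)]])
      (use assms(2) in \<open>auto simp: eventually_sequentially\<close>)
  then show ?thesis by simp
qed

lemma product_lower_bound:
  fixes a b r :: real
  assumes "0 < a" "0 < b" "r < a * b"
  obtains e where "0 < e" "\<And>x y. a - e \<le> x \<Longrightarrow> b - e \<le> y \<Longrightarrow> r \<le> x * y"
proof
  define e where "e = min (min a b) ((a * b - r) / (a + b))"
  show "0 < e" unfolding e_def using assms by auto
  fix x y assume xy: "a - e \<le> x" "b - e \<le> y"
  have "e \<le> a" "e \<le> b" "e \<le> (a * b - r) / (a + b)" unfolding e_def by auto
  then have "e * (a + b) \<le> a * b - r" using assms(1,2) by (simp add: pos_le_divide_eq)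
  moreover have "(a - e) * (b - e) = a * b - e * (a + b) + e * e" by (simp add: algebra_simps)
  ultimately have "r \<le> (a - e) * (b - e)" using zero_le_square[of e] by linarith
  also have "\<dots> \<le> x * y" using xy \<open>e \<le> a\<close> \<open>e \<le> b\<close> by (intro mult_mono) auto
  finally show "r \<le> x * y" .
qed

lemma tendsto_if_abs_diff_le_null:
  fixes a b e :: "nat \<Rightarrow> real"
  assumes "a \<longlonglongrightarrow> l" "\<And>n. \<bar>b n - a n\<bar> \<le> e n" "e \<longlonglongrightarrow> 0"
  shows "b \<longlonglongrightarrow> l"
proof -
  have "(\<lambda>n. b n - a n) \<longlonglongrightarrow> 0"
    by (rule Lim_null_comparison[OF _ assms(3)]) (use assms(2) in simp)
  from tendsto_add[OF this assms(1)] show ?thesis by simp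
qed

definition block_Dfn :: "(real \<Rightarrow> real) \<Rightarrow> nat \<Rightarrow> nat \<Rightarrow> real" where
  "block_Dfn g p m = Dfn g (m * p) (g 0)"

definition block_sum :: "(real \<Rightarrow> real) \<Rightarrow> (real \<Rightarrow> real) \<Rightarrow> nat \<Rightarrow> nat \<Rightarrow> real" where
  "block_sum g w p m =
     (\<Sum>r<p. w (critical_orbit g (m * p + r)) / (\<Prod>j<r. Df g (critical_orbit g (Suc (m * p + j)))))"

lemma sum_J_term_blocks:
  "(\<Sum>i<M * p. J_term g w i) = (\<Sum>m<M. block_sum g w p m / block_Dfn g p m)"
proof -
  have "(\<Sum>i<M * p. J_term g w i) = (\<Sum>m<M. \<Sum>r<p. J_term g w (m * p + r))"
    by (simp add: sum.nat_group[symmetric] sum.atLeastLessThan_shift_0 atLeast0LessThan comp_def)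
  also have "\<dots> = (\<Sum>m<M. block_sum g w p m / block_Dfn g p m)"
    unfolding block_sum_def block_Dfn_def sum_divide_distrib J_term_def Dfn_add
    by (simp add: mult.commute)
  finally show ?thesis .
qed

lemma block_Dfn_0 [simp]: "block_Dfn g p 0 = 1"
  by (simp add: block_Dfn_def Dfn_def)

lemma block_Dfn_Suc:
  "block_Dfn g p (Suc m) = block_Dfn g p m * (\<Prod>r<p. Df g (critical_orbit g (Suc (m * p + r))))"
  unfolding block_Dfn_def Dfn_add[symmetric] by (simp add: add.commute)

lemma block_sum_0: "block_sum g w p 0 = (\<Sum>r<p. J_term g w r)"
  by (simp add: block_sum_def J_term_def Dfn_critical_orbit)

lemma block_sum_periodic:
  "critical_orbit g p = 0 \<Longrightarrow> block_sum g w p m = block_sum g w p 0"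
  unfolding block_sum_def
  using critical_orbit_periodic[of g p m] by (simp add: add_Suc_right[symmetric] del: add_Suc_right)

locale expanding_orbit =
  fixes g w :: "real \<Rightarrow> real" and lam W :: real
  assumes lam_gt_1: "1 < lam"
    and abs_Df_ge: "\<And>x. x \<in> {-1..1} \<Longrightarrow> lam \<le> \<bar>Df g x\<bar>"
    and orbit_in_I: "\<And>i. critical_orbit g i \<in> {-1..1}"
    and abs_w_le: "\<And>x. x \<in> {-1..1} \<Longrightarrow> \<bar>w x\<bar> \<le> W"
begin

lemma W_nonneg: "0 \<le> W"
  using abs_w_le[of 0] by auto

lemma abs_Dfn_add_ge: "\<bar>Dfn g K (g 0)\<bar> * lam ^ k \<le> \<bar>Dfn g (K + k) (g 0)\<bar>"
proof -
  have "lam ^ k \<le> \<bar>\<Prod>j<k. Df g (critical_orbit g (Suc (K + j)))\<bar>"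
    using abs_Df_ge orbit_in_I lam_gt_1 by (intro abs_prod_ge_power) auto
  then show ?thesis unfolding Dfn_add abs_mult by (intro mult_left_mono) auto
qed

lemma abs_Dfn_ge_power: "lam ^ k \<le> \<bar>Dfn g k (g 0)\<bar>"
  using abs_Dfn_add_ge[of 0 k] by (simp add: Dfn_def)

lemma abs_Dfn_pos: "0 < \<bar>Dfn g k (g 0)\<bar>"
  using abs_Dfn_ge_power[of k] lam_gt_1 by (meson less_le_trans zero_less_one zero_less_power less_trans)

lemma abs_J_term_le: "\<bar>J_term g w (K + k)\<bar> \<le> W / \<bar>Dfn g K (g 0)\<bar> * (1 / lam) ^ k"
proof -
  have "\<bar>J_term g w (K + k)\<bar> = \<bar>w (critical_orbit g (K + k))\<bar> / \<bar>Dfn g (K + k) (g 0)\<bar>"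
    unfolding J_term_def by (simp add: abs_divide)
  also have "\<dots> \<le> W / (\<bar>Dfn g K (g 0)\<bar> * lam ^ k)"
    using abs_w_le[OF orbit_in_I] abs_Dfn_add_ge abs_Dfn_pos lam_gt_1 W_nonneg
    by (intro frac_le) auto
  also have "\<dots> = W / \<bar>Dfn g K (g 0)\<bar> * (1 / lam) ^ k"
    by (simp add: power_one_over field_simps)
  finally show ?thesis .
qed

lemma summable_J_term: "summable (J_term g w)"
proof (rule summable_rabs_cancel, rule summable_comparison_test')
  show "summable (\<lambda>k. W * (1 / lam) ^ k)"
    using lam_gt_1 by (intro summable_mult summable_geometric) auto
  show "norm \<bar>J_term g w k\<bar> \<le> W * (1 / lam) ^ k" for k
    using abs_J_term_le[of 0 k] by (simp add: Dfn_def)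
qed

lemma abs_partial_sum_diff_le:
  assumes "K \<le> N"
  shows "\<bar>(\<Sum>i<N. J_term g w i) - (\<Sum>i<K. J_term g w i)\<bar> \<le> W * lam / (lam - 1) / \<bar>Dfn g K (g 0)\<bar>"
proof -
  obtain d where N: "N = K + d" using assms le_Suc_ex by blast
  have "(\<Sum>i<N. J_term g w i) - (\<Sum>i<K. J_term g w i) = (\<Sum>k<d. J_term g w (K + k))"
    unfolding N by (induction d) auto
  also have "\<bar>\<dots>\<bar> \<le> (\<Sum>k<d. W / \<bar>Dfn g K (g 0)\<bar> * (1 / lam) ^ k)"
    by (rule order_trans[OF sum_abs sum_mono]) (rule abs_J_term_le)
  also have "\<dots> = W / \<bar>Dfn g K (g 0)\<bar> * (\<Sum>k<d. (1 / lam) ^ k)"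
    by (simp add: sum_distrib_left)
  also have "\<dots> \<le> W / \<bar>Dfn g K (g 0)\<bar> * (1 / (1 - 1 / lam))"
    using lam_gt_1 W_nonneg by (intro mult_left_mono sum_power_le) auto
  also have "\<dots> = W * lam / (lam - 1) / \<bar>Dfn g K (g 0)\<bar>"
    using lam_gt_1 by (simp add: field_simps)
  finally show ?thesis .
qed

lemma abs_suminf_diff_le:
  "\<bar>(\<Sum>i. J_term g w i) - (\<Sum>i<K. J_term g w i)\<bar> \<le> W * lam / (lam - 1) / \<bar>Dfn g K (g 0)\<bar>"
proof (rule LIMSEQ_le_const2)
  show "(\<lambda>N. \<bar>(\<Sum>i<N. J_term g w i) - (\<Sum>i<K. J_term g w i)\<bar>)
      \<longlonglongrightarrow> \<bar>(\<Sum>i. J_term g w i) - (\<Sum>i<K. J_term g w i)\<bar>"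
    by (intro tendsto_intros summable_LIMSEQ summable_J_term)
qed (use abs_partial_sum_diff_le in blast)

lemma abs_J_diff_le:
  assumes "\<not> c_periodic g \<or> K \<le> c_period g"
  shows "\<bar>J g w - (\<Sum>i<K. J_term g w i)\<bar> \<le> W * lam / (lam - 1) / \<bar>Dfn g K (g 0)\<bar>"
proof (cases "c_periodic g")
  case True
  then show ?thesis
    using assms abs_partial_sum_diff_le[of K "c_period g"] by (simp add: J_periodic)
next
  case False
  then show ?thesis using abs_suminf_diff_le by (simp add: J_not_periodic)
qed

lemma abs_J_diff_le_power:
  assumes "\<not> c_periodic g \<or> K \<le> c_period g"
  shows "\<bar>J g w - (\<Sum>i<K. J_term g w i)\<bar> \<le> W * lam / (lam - 1) / lam ^ K"
proof -
  have "W * lam / (lam - 1) / \<bar>Dfn g K (g 0)\<bar> \<le> W * lam / (lam - 1) / lam ^ K"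
    using abs_Dfn_ge_power[of K] abs_Dfn_pos[of K] lam_gt_1 W_nonneg
    by (intro divide_left_mono mult_pos_pos) auto
  then show ?thesis using abs_J_diff_le[OF assms] by linarith
qed

lemma exists_block_partial_sum_near_J:
  assumes "1 \<le> M" "0 < rho"
    and growth: "\<And>m. m \<le> M \<Longrightarrow> rho ^ m \<le> \<bar>block_Dfn g p m\<bar>"
    and orbit_nonzero: "\<And>i. i < M * p \<Longrightarrow> \<not> p dvd i \<Longrightarrow> critical_orbit g i \<noteq> 0"
  obtains k where "1 \<le> k" "k \<le> M"
    "\<bar>J g w - (\<Sum>m<k. block_sum g w p m / block_Dfn g p m)\<bar> \<le> W * lam / (lam - 1) / rho ^ M"
proof (cases "c_periodic g \<and> c_period g < M * p")
  case True
  then have "p dvd c_period g"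
    using orbit_nonzero c_period_props[of g] by blast
  then obtain k where k: "c_period g = k * p" by (metis dvdE mult.commute)
  have "1 \<le> k" using c_period_props(1)[of g] True k by (cases k) auto
  moreover have "k \<le> M" using True k by simp
  moreover have "J g w = (\<Sum>m<k. block_sum g w p m / block_Dfn g p m)"
    using True k by (simp add: J_periodic sum_J_term_blocks)
  moreover have "0 \<le> W * lam / (lam - 1) / rho ^ M"
    using W_nonneg lam_gt_1 \<open>0 < rho\<close> by simp
  ultimately show ?thesis using that by simp
next
  case False
  then have "\<bar>J g w - (\<Sum>m<M. block_sum g w p m / block_Dfn g p m)\<bar>
      \<le> W * lam / (lam - 1) / \<bar>block_Dfn g p M\<bar>"
    using abs_J_diff_le[of "M * p"] by (auto simp: sum_J_term_blocks block_Dfn_def)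
  also have "\<dots> \<le> W * lam / (lam - 1) / rho ^ M"
    using growth[of M] zero_less_power[OF \<open>0 < rho\<close>, of M] W_nonneg lam_gt_1
    by (intro divide_left_mono mult_pos_pos) auto
  finally show ?thesis using that \<open>1 \<le> M\<close> by blast
qed

lemma abs_block_limit_le:
  assumes "J g w = 0" "2 < rho" "1 \<le> M"
    and growth: "\<And>m. m \<le> M \<Longrightarrow> rho ^ m \<le> \<bar>block_Dfn g p m\<bar>"
    and orbit_nonzero: "\<And>i. i < M * p \<Longrightarrow> \<not> p dvd i \<Longrightarrow> critical_orbit g i \<noteq> 0"
  shows "\<bar>P\<bar> * ((rho - 2) / (rho - 1))
    \<le> (\<Sum>m<M. \<bar>block_sum g w p m - P\<bar>) + W * lam / (lam - 1) / rho ^ M"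
proof -
  let ?E = "block_Dfn g p" and ?B = "block_sum g w p"
  obtain k where k: "1 \<le> k" "k \<le> M"
    and near: "\<bar>\<Sum>m<k. ?B m / ?E m\<bar> \<le> W * lam / (lam - 1) / rho ^ M"
    using exists_block_partial_sum_near_J[OF \<open>1 \<le> M\<close> _ growth orbit_nonzero] assms(1,2) by auto
  have "\<bar>P * (\<Sum>m<k. 1 / ?E m) - (\<Sum>m<k. ?B m / ?E m)\<bar> = \<bar>\<Sum>m<k. (P - ?B m) / ?E m\<bar>"
    by (simp add: sum_distrib_left sum_subtractf diff_divide_distrib)
  also have "\<dots> \<le> (\<Sum>m<k. \<bar>?B m - P\<bar>)"
  proof (rule order_trans[OF sum_abs sum_mono])
    fix m assume "m \<in> {..<k}"
    then have "m \<le> M" using k(2) by simp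
    then have "1 \<le> \<bar>?E m\<bar>"
      using growth[of m] one_le_power[of rho m] assms(2) by linarith
    then have "\<bar>?B m - P\<bar> / \<bar>?E m\<bar> \<le> \<bar>?B m - P\<bar> / 1"
      by (intro divide_left_mono) auto
    then show "\<bar>(P - ?B m) / ?E m\<bar> \<le> \<bar>?B m - P\<bar>"
      by (simp add: abs_divide abs_minus_commute)
  qed
  also have "\<dots> \<le> (\<Sum>m<M. \<bar>?B m - P\<bar>)"
    by (rule sum_mono2) (use k(2) in auto)
  finally have "\<bar>P * (\<Sum>m<k. 1 / ?E m) - (\<Sum>m<k. ?B m / ?E m)\<bar> \<le> (\<Sum>m<M. \<bar>?B m - P\<bar>)" .
  moreover have "(rho - 2) / (rho - 1) \<le> \<bar>\<Sum>m<k. 1 / ?E m\<bar>"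
    by (rule abs_sum_inverse_ge[OF assms(2) k(1)]) (use growth k(2) in auto)
  then have "\<bar>P\<bar> * ((rho - 2) / (rho - 1)) \<le> \<bar>P * (\<Sum>m<k. 1 / ?E m)\<bar>"
    unfolding abs_mult by (intro mult_left_mono) auto
  ultimately show ?thesis using near by linarith
qed

end

locale perturbation =
  fixes f :: "real \<Rightarrow> real" and fs :: "nat \<Rightarrow> real \<Rightarrow> real"
    and v :: "real \<Rightarrow> real" and vs :: "nat \<Rightarrow> real \<Rightarrow> real"
  assumes f: "pw_expanding_unimodal f" and fs: "\<And>n. pw_expanding_unimodal (fs n)"
    and fs_to_f: "(\<lambda>n. Bnorm 1 (\<lambda>x. fs n x - f x)) \<longlonglongrightarrow> 0"
    and v: "Bk 0 v" and vs: "\<And>n. Bk 0 (vs n)"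
    and vs_to_v: "(\<lambda>n. Bnorm 0 (\<lambda>x. vs n x - v x)) \<longlonglongrightarrow> 0"
begin

lemma abs_fs_diff_le: "x \<in> {-1..1} \<Longrightarrow> \<bar>fs n x - f x\<bar> \<le> Bnorm 1 (\<lambda>x. fs n x - f x)"
  using pw_expanding_unimodalD(1)[OF fs] pw_expanding_unimodalD(1)[OF f]
  by (intro abs_le_Bnorm[where h = "\<lambda>x. fs n x - f x"] continuous_intros)

lemma abs_vs_diff_le: "x \<in> {-1..1} \<Longrightarrow> \<bar>vs n x - v x\<bar> \<le> Bnorm 0 (\<lambda>x. vs n x - v x)"
  using vs[of n] v unfolding Bk_def
  by (intro abs_le_Bnorm[where h = "\<lambda>x. vs n x - v x"] continuous_intros) auto

lemma tendsto_critical_orbit: "(\<lambda>n. critical_orbit (fs n) i) \<longlonglongrightarrow> critical_orbit f i"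
proof (induction i)
  case (Suc i)
  have "(\<lambda>n. f (critical_orbit (fs n) i)) \<longlonglongrightarrow> f (critical_orbit f i)"
    using continuous_on_tendsto_compose[OF pw_expanding_unimodalD(1)[OF f] Suc]
      critical_orbit_in_I[OF f] critical_orbit_in_I[OF fs] by simp
  then show ?case unfolding critical_orbit_Suc
    by (rule tendsto_if_abs_diff_le_null[OF _ abs_fs_diff_le[OF critical_orbit_in_I[OF fs]] fs_to_f])
qed simp

lemma tendsto_vs_critical_orbit: "(\<lambda>n. vs n (critical_orbit (fs n) i)) \<longlonglongrightarrow> v (critical_orbit f i)"
proof -
  have "(\<lambda>n. v (critical_orbit (fs n) i)) \<longlonglongrightarrow> v (critical_orbit f i)"
    using continuous_on_tendsto_compose[of "{-1..1}" v, OF _ tendsto_critical_orbit] v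
      critical_orbit_in_I[OF f] critical_orbit_in_I[OF fs] unfolding Bk_def by simp
  then show ?thesis
    by (rule tendsto_if_abs_diff_le_null[OF _ abs_vs_diff_le[OF critical_orbit_in_I[OF fs]] vs_to_v])
qed

lemma eventually_critical_orbits_nonzero:
  assumes "finite S" "\<And>i. i \<in> S \<Longrightarrow> critical_orbit f i \<noteq> 0"
  shows "eventually (\<lambda>n. \<forall>i\<in>S. critical_orbit (fs n) i \<noteq> 0) sequentially"
  using assms by (intro eventually_ball_finite ballI tendsto_imp_eventually_ne[OF tendsto_critical_orbit])

lemma tendsto_Df_f:
  assumes y: "y \<longlonglongrightarrow> y0" "\<And>n. y n \<in> {-1..1}" "y0 \<in> {-1..1}" "y0 \<noteq> 0"
  shows "(\<lambda>n. Df f (y n)) \<longlonglongrightarrow> Df f y0"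
proof (cases "y0 < 0")
  case True
  then have ev: "eventually (\<lambda>n. y n \<in> {-1..0}) sequentially"
    using order_tendstoD(2)[OF y(1) True] y(2) by (auto elim: eventually_mono)
  have "(\<lambda>n. pD {-1..0} 1 f (y n)) \<longlonglongrightarrow> Df f y0"
    using continuous_on_tendsto_compose[OF Ck_on_continuous_on[OF pw_expanding_unimodalD(2)[OF f]] y(1)]
      True y(3) ev by (simp add: Df_def)
  moreover have "eventually (\<lambda>n. pD {-1..0} 1 f (y n) = Df f (y n)) sequentially"
    using ev by eventually_elim (simp add: Df_def)
  ultimately show ?thesis by (rule Lim_transform_eventually)
next
  case False
  then have pos: "0 < y0" using y(4) by simp
  then have ev: "eventually (\<lambda>n. 0 < y n) sequentially" by (rule order_tendstoD(1)[OF y(1)])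
  have "eventually (\<lambda>n. y n \<in> {0..1}) sequentially"
    using ev y(2) by (auto elim: eventually_mono)
  then have "(\<lambda>n. pD {0..1} 1 f (y n)) \<longlonglongrightarrow> Df f y0"
    using continuous_on_tendsto_compose[OF Ck_on_continuous_on[OF pw_expanding_unimodalD(3)[OF f]] y(1)]
      pos y(3) by (simp add: Df_def)
  moreover have "eventually (\<lambda>n. pD {0..1} 1 f (y n) = Df f (y n)) sequentially"
    using ev by eventually_elim (simp add: Df_def)
  ultimately show ?thesis by (rule Lim_transform_eventually)
qed

lemma tendsto_Df_fs:
  assumes "y \<longlonglongrightarrow> y0" "\<And>n. y n \<in> {-1..1}" "y0 \<in> {-1..1}" "y0 \<noteq> 0"
  shows "(\<lambda>n. Df (fs n) (y n)) \<longlonglongrightarrow> Df f y0"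
  by (rule tendsto_if_abs_diff_le_null[OF tendsto_Df_f[OF assms]
        abs_Df_diff_le_Bnorm[OF fs f assms(2)] fs_to_f])

text \<open>At the turning point c the derivative of f jumps, so near c only the smaller of the two
  one-sided derivatives of f at c survives as a lower bound.\<close>

lemma eventually_abs_Df_fs_near_c:
  assumes y: "y \<longlonglongrightarrow> 0" "\<And>n. y n \<in> {-1..1}" and "0 < e"
  shows "eventually (\<lambda>n. min \<bar>pD {0..1} 1 f 0\<bar> \<bar>pD {-1..0} 1 f 0\<bar> - e \<le> \<bar>Df (fs n) (y n)\<bar>) sequentially"
proof -
  have e2: "0 < e / 2" using \<open>0 < e\<close> by simp
  have lim_left: "(\<lambda>n. pD {-1..0} 1 f (min (y n) 0)) \<longlonglongrightarrow> pD {-1..0} 1 f 0"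
    using continuous_on_tendsto_compose[OF Ck_on_continuous_on[OF pw_expanding_unimodalD(2)[OF f]]
        tendsto_min[OF y(1) tendsto_const[of 0]]] y(2) by fastforce
  have left: "eventually (\<lambda>n. \<bar>pD {-1..0} 1 f (min (y n) 0) - pD {-1..0} 1 f 0\<bar> < e / 2) sequentially"
    using tendstoD[OF lim_left e2] by (simp add: dist_real_def)
  have lim_right: "(\<lambda>n. pD {0..1} 1 f (max (y n) 0)) \<longlonglongrightarrow> pD {0..1} 1 f 0"
    using continuous_on_tendsto_compose[OF Ck_on_continuous_on[OF pw_expanding_unimodalD(3)[OF f]]
        tendsto_max[OF y(1) tendsto_const[of 0]]] y(2) by fastforce
  have right: "eventually (\<lambda>n. \<bar>pD {0..1} 1 f (max (y n) 0) - pD {0..1} 1 f 0\<bar> < e / 2) sequentially"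
    using tendstoD[OF lim_right e2] by (simp add: dist_real_def)
  show ?thesis using left right order_tendstoD(2)[OF fs_to_f e2]
  proof eventually_elim
    case (elim n)
    have "\<bar>Df (fs n) (y n) - Df f (y n)\<bar> < e / 2"
      using abs_Df_diff_le_Bnorm[OF fs f y(2)] elim(3) by (rule le_less_trans)
    moreover have "min \<bar>pD {0..1} 1 f 0\<bar> \<bar>pD {-1..0} 1 f 0\<bar> - e / 2 \<le> \<bar>Df f (y n)\<bar>"
      using elim(1,2) unfolding Df_def by (cases "y n \<le> 0") (auto simp: min_def max_def abs_if split: if_splits)
    ultimately show ?case by linarith
  qed
qed

lemma uniform_expanding_orbits:
  obtains lam W where "expanding_orbit f v lam W"
    "eventually (\<lambda>n. expanding_orbit (fs n) (vs n) lam W) sequentially"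
proof -
  obtain lf where lf: "1 < lf" "\<And>x. x \<in> {-1..1} \<Longrightarrow> lf \<le> \<bar>Df f x\<bar>"
    using pw_expanding_unimodal_abs_Df_ge[OF f] by blast
  have "bounded (v ` {-1..1})"
    using v unfolding Bk_def by (intro compact_imp_bounded compact_continuous_image) auto
  then obtain Wv where Wv: "\<And>x. x \<in> {-1..1} \<Longrightarrow> \<bar>v x\<bar> \<le> Wv"
    unfolding bounded_real by blast
  define e where "e = (lf - 1) / 2"
  have e: "0 < e" "1 < lf - e" using lf(1) unfolding e_def by (simp_all add: field_simps)
  show ?thesis
  proof
    show "expanding_orbit f v (lf - e) (Wv + 1)"
    proof
      fix x :: real assume x: "x \<in> {-1..1}"
      show "lf - e \<le> \<bar>Df f x\<bar>" using lf(2)[OF x] e(1) by linarith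
      show "\<bar>v x\<bar> \<le> Wv + 1" using Wv[OF x] by linarith
    qed (use e critical_orbit_in_I[OF f] in auto)
    have "eventually (\<lambda>n. Bnorm 1 (\<lambda>x. fs n x - f x) < e \<and> Bnorm 0 (\<lambda>x. vs n x - v x) < 1) sequentially"
      using e(1) by (intro eventually_conj order_tendstoD(2)[OF fs_to_f] order_tendstoD(2)[OF vs_to_v]) auto
    then show "eventually (\<lambda>n. expanding_orbit (fs n) (vs n) (lf - e) (Wv + 1)) sequentially"
    proof eventually_elim
      case (elim n)
      show ?case
      proof
        fix x :: real assume x: "x \<in> {-1..1}"
        show "lf - e \<le> \<bar>Df (fs n) x\<bar>"
          using abs_Df_diff_le_Bnorm[OF fs f x, of n] elim lf(2)[OF x] by linarith
        show "\<bar>vs n x\<bar> \<le> Wv + 1"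
          using abs_vs_diff_le[OF x, of n] elim Wv[OF x] by linarith
      qed (use e critical_orbit_in_I[OF fs] in auto)
    qed
  qed
qed

lemma Df_f_nonzero:
  assumes "x \<in> {-1..1}"
  shows "Df f x \<noteq> 0"
proof -
  obtain lam where "1 < lam" "lam \<le> \<bar>Df f x\<bar>"
    using pw_expanding_unimodal_abs_Df_ge[OF f] assms by metis
  then show ?thesis by auto
qed

lemma prod_Df_f_nonzero: "finite S \<Longrightarrow> (\<Prod>j\<in>S. Df f (critical_orbit f (h j))) \<noteq> 0"
  using Df_f_nonzero[OF critical_orbit_in_I[OF f]] by (simp add: prod_zero_iff)

lemma tendsto_prod_Df:
  assumes "\<And>j. j \<in> S \<Longrightarrow> critical_orbit f (h j) \<noteq> 0"
  shows "(\<lambda>n. \<Prod>j\<in>S. Df (fs n) (critical_orbit (fs n) (h j))) \<longlonglongrightarrow> (\<Prod>j\<in>S. Df f (critical_orbit f (h j)))"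
  using assms critical_orbit_in_I[OF f] critical_orbit_in_I[OF fs]
  by (intro tendsto_prod tendsto_Df_fs tendsto_critical_orbit) auto

lemma tendsto_J_term:
  assumes "\<And>j. j < i \<Longrightarrow> critical_orbit f (Suc j) \<noteq> 0"
  shows "(\<lambda>n. J_term (fs n) (vs n) i) \<longlonglongrightarrow> J_term f v i"
  unfolding J_term_def Dfn_critical_orbit
  using assms by (intro tendsto_divide tendsto_vs_critical_orbit tendsto_prod_Df prod_Df_f_nonzero) auto

lemma tendsto_block_sum:
  assumes "\<And>j. j + 1 < p \<Longrightarrow> critical_orbit f (Suc (m * p + j)) \<noteq> 0"
  shows "(\<lambda>n. block_sum (fs n) (vs n) p m) \<longlonglongrightarrow> block_sum f v p m"
  unfolding block_sum_def
  using assms by (intro tendsto_sum tendsto_divide tendsto_vs_critical_orbit tendsto_prod_Df prod_Df_f_nonzero) auto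

lemma eventually_block_ratio_ge:
  assumes per: "c_periodic f" "c_period f = Suc q" and "0 < rho"
    and rho: "rho < \<bar>Dfn f q (f 0)\<bar> * min \<bar>pD {0..1} 1 f 0\<bar> \<bar>pD {-1..0} 1 f 0\<bar>"
  shows "eventually (\<lambda>n. rho \<le> \<bar>\<Prod>r<Suc q. Df (fs n) (critical_orbit (fs n) (Suc (m * Suc q + r)))\<bar>)
    sequentially"
proof -
  let ?a = "\<bar>Dfn f q (f 0)\<bar>" and ?b = "min \<bar>pD {0..1} 1 f 0\<bar> \<bar>pD {-1..0} 1 f 0\<bar>"
  have orbit: "critical_orbit f (Suc (m * Suc q + r)) = critical_orbit f (Suc r)" for r
    using critical_orbit_periodic[OF c_period_props(2)[OF per(1)], of m "Suc r"] per(2) by simp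
  have "0 < ?a * ?b" using \<open>0 < rho\<close> rho by linarith
  then have "0 < ?a" "0 < ?b" by (simp_all add: zero_less_mult_iff)
  then obtain e where e: "0 < e" "\<And>x y. ?a - e \<le> x \<Longrightarrow> ?b - e \<le> y \<Longrightarrow> rho \<le> x * y"
    using product_lower_bound rho by blast
  have nonzero: "critical_orbit f (Suc (m * Suc q + r)) \<noteq> 0" if "r \<in> {..<q}" for r
    unfolding orbit using c_period_props(3)[OF per(1), of "Suc r"] per(2) that by simp
  have "(\<lambda>n. \<bar>\<Prod>r<q. Df (fs n) (critical_orbit (fs n) (Suc (m * Suc q + r)))\<bar>)
      \<longlonglongrightarrow> \<bar>\<Prod>r<q. Df f (critical_orbit f (Suc (m * Suc q + r)))\<bar>"
    by (intro tendsto_rabs tendsto_prod_Df nonzero)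
  also have "(\<Prod>r<q. Df f (critical_orbit f (Suc (m * Suc q + r)))) = Dfn f q (f 0)"
    unfolding Dfn_critical_orbit orbit ..
  finally have "?a - e < ?a" "(\<lambda>n. \<bar>\<Prod>r<q. Df (fs n) (critical_orbit (fs n) (Suc (m * Suc q + r)))\<bar>)
      \<longlonglongrightarrow> ?a" using e(1) by simp_all
  from order_tendstoD(1)[OF this(2,1)]
  have first: "eventually (\<lambda>n. ?a - e \<le> \<bar>\<Prod>r<q. Df (fs n) (critical_orbit (fs n) (Suc (m * Suc q + r)))\<bar>)
      sequentially"
    by (rule eventually_mono) simp
  have "critical_orbit f (Suc (m * Suc q + q)) = 0"
    using critical_orbit_periodic[OF c_period_props(2)[OF per(1)], of "Suc m" 0] per(2)
    by (simp add: algebra_simps)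
  then have "(\<lambda>n. critical_orbit (fs n) (Suc (m * Suc q + q))) \<longlonglongrightarrow> 0"
    using tendsto_critical_orbit[of "Suc (m * Suc q + q)"] by simp
  then have last: "eventually (\<lambda>n. ?b - e \<le> \<bar>Df (fs n) (critical_orbit (fs n) (Suc (m * Suc q + q)))\<bar>)
      sequentially"
    by (rule eventually_abs_Df_fs_near_c[OF _ critical_orbit_in_I[OF fs] e(1)])
  show ?thesis using first last
  proof eventually_elim
    case (elim n)
    then show ?case by (simp only: prod.lessThan_Suc abs_mult add_Suc_right e(2))
  qed
qed

lemma eventually_block_Dfn_growth:
  assumes "c_periodic f" "c_period f = Suc q" "0 < rho"
    and "rho < \<bar>Dfn f q (f 0)\<bar> * min \<bar>pD {0..1} 1 f 0\<bar> \<bar>pD {-1..0} 1 f 0\<bar>"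
  shows "eventually (\<lambda>n. \<forall>m\<le>M. rho ^ m \<le> \<bar>block_Dfn (fs n) (Suc q) m\<bar>) sequentially"
proof -
  have "eventually (\<lambda>n. \<forall>m\<in>{..<M}.
      rho \<le> \<bar>\<Prod>r<Suc q. Df (fs n) (critical_orbit (fs n) (Suc (m * Suc q + r)))\<bar>) sequentially"
    by (intro eventually_ball_finite ballI eventually_block_ratio_ge[OF assms]) auto
  then show ?thesis
  proof eventually_elim
    case (elim n)
    have "rho ^ m \<le> \<bar>block_Dfn (fs n) (Suc q) m\<bar>" if "m \<le> M" for m
      using that
    proof (induction m)
      case (Suc m)
      then have "rho ^ m * rho \<le> \<bar>block_Dfn (fs n) (Suc q) m\<bar>
          * \<bar>\<Prod>r<Suc q. Df (fs n) (critical_orbit (fs n) (Suc (m * Suc q + r)))\<bar>"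
        using elim \<open>0 < rho\<close> by (intro mult_mono) auto
      then show ?case by (simp add: block_Dfn_Suc abs_mult mult.commute)
    qed simp
    then show ?case by blast
  qed
qed

lemma J_eq_0_if_not_periodic:
  assumes not_per: "\<not> c_periodic f" and J0: "\<And>n. J (fs n) (vs n) = 0"
  shows "J f v = 0"
proof -
  obtain lam W where exp_f: "expanding_orbit f v lam W"
    and exp_fs: "eventually (\<lambda>n. expanding_orbit (fs n) (vs n) lam W) sequentially"
    by (rule uniform_expanding_orbits)
  have nonzero: "critical_orbit f i \<noteq> 0" if "1 \<le> i" for i
    using not_per that unfolding c_periodic_def critical_orbit_def by auto
  have "\<bar>J f v\<bar> \<le> 2 * (W * lam / (lam - 1)) / lam ^ N" for N
  proof -
    let ?T = "W * lam / (lam - 1) / lam ^ N"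
    have "eventually (\<lambda>n. \<forall>i\<in>{1..<N}. critical_orbit (fs n) i \<noteq> 0) sequentially"
      using nonzero by (intro eventually_critical_orbits_nonzero) auto
    then have "eventually (\<lambda>n. \<bar>\<Sum>i<N. J_term (fs n) (vs n) i\<bar> \<le> ?T) sequentially"
      using exp_fs
    proof eventually_elim
      case (elim n)
      then have "\<not> c_periodic (fs n) \<or> N \<le> c_period (fs n)"
        by (intro c_period_ge_if_orbit_nonzero) auto
      then show ?case using expanding_orbit.abs_J_diff_le_power[OF elim(2)] J0[of n] by simp
    qed
    moreover have "(\<lambda>n. \<Sum>i<N. J_term (fs n) (vs n) i) \<longlonglongrightarrow> (\<Sum>i<N. J_term f v i)"
      using nonzero by (intro tendsto_sum tendsto_J_term) auto
    ultimately have "\<bar>\<Sum>i<N. J_term f v i\<bar> \<le> ?T"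
      by (intro tendsto_upperbound[OF tendsto_rabs]) auto
    moreover have "\<bar>J f v - (\<Sum>i<N. J_term f v i)\<bar> \<le> ?T"
      using expanding_orbit.abs_J_diff_le_power[OF exp_f] not_per by simp
    ultimately show ?thesis by linarith
  qed
  then show ?thesis
    using zero_if_abs_le_geometric[OF expanding_orbit.lam_gt_1[OF exp_f]] by blast
qed

lemma abs_J_le_geometric_if_periodic:
  assumes per: "c_periodic f" "c_period f = Suc q" and rho: "2 < rho"
    "rho < \<bar>Dfn f q (f 0)\<bar> * min \<bar>pD {0..1} 1 f 0\<bar> \<bar>pD {-1..0} 1 f 0\<bar>"
    and J0: "\<And>n. J (fs n) (vs n) = 0"
    and exp_fs: "eventually (\<lambda>n. expanding_orbit (fs n) (vs n) lam W) sequentially"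
    and "1 \<le> M"
  shows "\<bar>J f v\<bar> * ((rho - 2) / (rho - 1)) \<le> W * lam / (lam - 1) / rho ^ M"
proof -
  have block: "block_sum f v (Suc q) m = J f v" for m
    using block_sum_periodic[OF c_period_props(2)[OF per(1)]] block_sum_0 J_periodic[OF per(1)] per(2)
    by simp
  have orbit_nonzero: "critical_orbit f (Suc (m * Suc q + j)) \<noteq> 0" if "j + 1 < Suc q" for m j
    using critical_orbit_periodic[OF c_period_props(2)[OF per(1)], of m "Suc j"]
      c_period_props(3)[OF per(1), of "Suc j"] per(2) that by simp
  have "0 < rho" using rho(1) by simp
  let ?err = "\<lambda>n. \<Sum>m<M. \<bar>block_sum (fs n) (vs n) (Suc q) m - J f v\<bar>"
  have "?err \<longlonglongrightarrow> (\<Sum>m<M. \<bar>J f v - J f v\<bar>)"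
    using tendsto_block_sum[OF orbit_nonzero] block
    by (intro tendsto_sum tendsto_rabs tendsto_diff tendsto_const) auto
  then have "(\<lambda>n. ?err n + W * lam / (lam - 1) / rho ^ M) \<longlonglongrightarrow> 0 + W * lam / (lam - 1) / rho ^ M"
    by (intro tendsto_add tendsto_const) simp
  moreover
  have "eventually (\<lambda>n. \<forall>i\<in>{i. i < M * Suc q \<and> \<not> Suc q dvd i}. critical_orbit (fs n) i \<noteq> 0)
      sequentially"
    using critical_orbit_nonzero_off_multiples[OF per(1)] per(2)
    by (intro eventually_critical_orbits_nonzero) auto
  then have "eventually (\<lambda>n. \<bar>J f v\<bar> * ((rho - 2) / (rho - 1))
      \<le> ?err n + W * lam / (lam - 1) / rho ^ M) sequentially"
    using eventually_block_Dfn_growth[OF per \<open>0 < rho\<close> rho(2), of M] exp_fs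
  proof eventually_elim
    case (elim n)
    show ?case
      by (rule expanding_orbit.abs_block_limit_le[OF elim(3) J0 rho(1) \<open>1 \<le> M\<close>]) (use elim in auto)
  qed
  ultimately show ?thesis by (intro tendsto_lowerbound) auto
qed

lemma J_eq_0_if_periodic:
  assumes per: "c_periodic f" and "2 \<le> c_period f"
    and good: "2 < \<bar>Dfn f (c_period f - 1) (f 0)\<bar> * min \<bar>pD {0..1} 1 f 0\<bar> \<bar>pD {-1..0} 1 f 0\<bar>"
    and J0: "\<And>n. J (fs n) (vs n) = 0"
  shows "J f v = 0"
proof -
  obtain q where p: "c_period f = Suc q" using assms(2) by (cases "c_period f") auto
  define rho where "rho = (\<bar>Dfn f q (f 0)\<bar> * min \<bar>pD {0..1} 1 f 0\<bar> \<bar>pD {-1..0} 1 f 0\<bar> + 2) / 2"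
  have rho: "2 < rho" "rho < \<bar>Dfn f q (f 0)\<bar> * min \<bar>pD {0..1} 1 f 0\<bar> \<bar>pD {-1..0} 1 f 0\<bar>"
    using good unfolding p rho_def by (simp_all add: field_simps)
  obtain lam W where exp_fs: "eventually (\<lambda>n. expanding_orbit (fs n) (vs n) lam W) sequentially"
    by (rule uniform_expanding_orbits)
  have "\<bar>J f v * ((rho - 2) / (rho - 1))\<bar> \<le> W * lam / (lam - 1) / rho ^ M" if "1 \<le> M" for M
    using abs_J_le_geometric_if_periodic[OF per p rho J0 exp_fs that] rho(1) by (simp add: abs_mult)
  then have "J f v * ((rho - 2) / (rho - 1)) = 0"
    using rho(1) by (intro zero_if_abs_le_geometric[where r = rho and C = "W * lam / (lam - 1)"]) auto
  then show ?thesis using rho(1) by simp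
qed

end

theorem corollary3p1:
  fixes f :: "real \<Rightarrow> real" and fs :: "nat \<Rightarrow> real \<Rightarrow> real"
    and v :: "real \<Rightarrow> real" and vs :: "nat \<Rightarrow> real \<Rightarrow> real"
  assumes "good f"
    and "\<And>n. pw_expanding_unimodal (fs n)"
    and "(\<lambda>n. Bnorm 1 (\<lambda>x. fs n x - f x)) \<longlonglongrightarrow> 0"
    and "Bk 0 v" and "\<And>n. Bk 0 (vs n)"
    and "(\<lambda>n. Bnorm 0 (\<lambda>x. vs n x - v x)) \<longlonglongrightarrow> 0"
    and "\<And>n. J (fs n) (vs n) = 0"
  shows "J f v = 0"
proof -
  interpret perturbation f fs v vs
    using assms(1-6) unfolding good_def by unfold_locales auto
  show ?thesis
  proof (cases "c_periodic f")
    case True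
    with assms(1,7) show ?thesis unfolding good_def by (auto intro: J_eq_0_if_periodic)
  next
    case False
    then show ?thesis using assms(7) by (rule J_eq_0_if_not_periodic)
  qed
qed

end
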